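(* Let $T$, $\mathcal{J}=\langle N,B\rangle$, an allocation $(\mathcal{C}_s,\mathcal{B}_s)$, a node $v$ and a scenario $\sigma$ be as in the context. If $T_v$ can offer $n_v$ working VMs in scenario $\sigma$ for some integer $n_v\in(N/2,N]$, then for every integer $m$ with $0\le m\le N-n_v$, $T_v$ can offer $m$ working VMs in scenario $\sigma$ (with the same bandwidth allocation $\mathcal{B}_s$).
   Context: $T=(V,L)$ is a rooted tree whose leaves form the set $H$ of physical machines (PMs) and whose internal nodes are switches; for a node $u$, $T_u$ is the subtree rooted at $u$ and $l_u$ is the link from $u$ to its parent. A request is $\mathcal{J}=\langle N,B\rangle$ with $N$ a positive integer and $B\ge0$. An allocation is a pair $(\mathcal{C}_s,\mathcal{B}_s)$ with $\mathcal{C}_s:H\to\mathbb{Z}_{\ge0}$ (VM slots allocated on each PM) and $\mathcal{B}_s:L\to\mathbb{R}_{\ge0}$ (bandwidth allocated on each link). A scenario is either "no failure" or the failure of a single PM $F\in H$. The subtree $T_v$ can offer $n$ working VMs in a scenario if there is an assignment $w:H\cap T_v\to\mathbb{Z}_{\ge0}$ with $w(h)\le\mathcal{C}_s(h)$ for all $h$, $w(F)=0$ if $F$ is the failed PM, $\sum_{h\in H\cap T_v}w(h)=n$, and for every node $u$ of $T_v$ (including $u=v$, whenever $l_u$ exists) $\min\{n_u,N-n_u\}\cdot B\le\mathcal{B}_s(l_u)$, where $n_u=\sum_{h\in H\cap T_u}w(h)$. *)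

theory Defs
  imports Complex_Main
begin

text \<open>A rooted tree on a finite node set V with root r, given by a parent function par
  (par u is the other end of the link l_u, for u \<noteq> r). The link l_u is identified with
  the node u (u \<noteq> r).\<close>

definition tree_edges :: "'v set \<Rightarrow> 'v \<Rightarrow> ('v \<Rightarrow> 'v) \<Rightarrow> ('v \<times> 'v) set" where
  "tree_edges V r par = {(x, par x) | x. x \<in> V \<and> x \<noteq> r}"

definition rooted_tree :: "'v set \<Rightarrow> 'v \<Rightarrow> ('v \<Rightarrow> 'v) \<Rightarrow> bool" where
  "rooted_tree V r par \<longleftrightarrow> finite V \<and> r \<in> V \<and> (\<forall>x\<in>V - {r}. par x \<in> V)
     \<and> (\<forall>x\<in>V. (x, r) \<in> (tree_edges V r par)\<^sup>*)"

definition subtree :: "'v set \<Rightarrow> 'v \<Rightarrow> ('v \<Rightarrow> 'v) \<Rightarrow> 'v \<Rightarrow> 'v set" where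
  "subtree V r par u = {x \<in> V. (x, u) \<in> (tree_edges V r par)\<^sup>*}"

text \<open>Leaves (the physical machines H).\<close>
definition leaves :: "'v set \<Rightarrow> 'v \<Rightarrow> ('v \<Rightarrow> 'v) \<Rightarrow> 'v set" where
  "leaves V r par = {x \<in> V. \<not> (\<exists>y \<in> V - {r}. par y = x)}"

text \<open>Scenario: None = no failure, Some F = failure of PM F.
  C = VM slots per PM, Bw u = bandwidth allocated on link l_u (u \<noteq> r).\<close>
definition can_offer ::
  "'v set \<Rightarrow> 'v \<Rightarrow> ('v \<Rightarrow> 'v) \<Rightarrow> nat \<Rightarrow> real \<Rightarrow> ('v \<Rightarrow> nat) \<Rightarrow> ('v \<Rightarrow> real)
   \<Rightarrow> 'v option \<Rightarrow> 'v \<Rightarrow> nat \<Rightarrow> bool" where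
  "can_offer V r par N B C Bw sc v n \<longleftrightarrow>
     (\<exists>w :: 'v \<Rightarrow> nat.
        (\<forall>h \<in> leaves V r par \<inter> subtree V r par v. w h \<le> C h)
      \<and> (\<forall>h \<in> leaves V r par \<inter> subtree V r par v. sc = Some h \<longrightarrow> w h = 0)
      \<and> (\<Sum>h \<in> leaves V r par \<inter> subtree V r par v. w h) = n
      \<and> (\<forall>u \<in> subtree V r par v. u \<noteq> r \<longrightarrow>
           (let nu = (\<Sum>h \<in> leaves V r par \<inter> subtree V r par u. w h)
            in min (real nu) (real N - real nu) * B \<le> Bw u)))"

end

theory Submission
  imports Defs
begin

text \<open>Thin out an assignment witnessing n_v working VMs pointwise until only m
  remain. Every subtree T_u then holds n'_u \<le> min n_u m VMs; as n_u \<le> n_v and m + n_v \<le> N,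
  we get min n'_u (N - n'_u) = n'_u \<le> min n_u (N - n_u), so no link needs more bandwidth
  than before. The hypothesis n_v > N/2 only serves to give m \<le> n_v.\<close>

lemma exists_pointwise_le_sum_eq:
  fixes w :: "'a \<Rightarrow> nat"
  assumes "finite S" "m \<le> sum w S"
  shows "\<exists>w'. (\<forall>h. w' h \<le> w h) \<and> sum w' S = m"
  using assms
proof (induction S arbitrary: m rule: finite_induct)
  case empty
  then show ?case by (intro exI[of _ "\<lambda>_. 0"]) auto
next
  case (insert x S)
  show ?case
  proof (cases "m \<le> sum w S")
    case True
    then obtain w' where w': "\<forall>h. w' h \<le> w h" "sum w' S = m" using insert by blast
    have "sum (w'(x := 0)) S = sum w' S" using insert(2) by (intro sum.cong) auto
    then show ?thesis using w' insert(1,2) by (intro exI[of _ "w'(x := 0)"]) auto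
  next
    case False
    have "sum (w(x := m - sum w S)) S = sum w S" using insert(2) by (intro sum.cong) auto
    then show ?thesis using False insert by (intro exI[of _ "w(x := m - sum w S)"]) auto
  qed
qed

lemma min_demand_mono:
  fixes k k' n m N :: nat and B :: real
  assumes "k' \<le> k" "k \<le> n" "k' \<le> m" "m + n \<le> N" "0 \<le> B"
  shows "min (real k') (real N - real k') * B \<le> min (real k) (real N - real k) * B"
proof -
  have "min (real k') (real N - real k') \<le> min (real k) (real N - real k)"
    using assms(1-4) by simp
  then show ?thesis using assms(5) by (rule mult_right_mono)
qed

lemma subtree_mono:
  assumes "u \<in> subtree V r par v"
  shows "subtree V r par u \<subseteq> subtree V r par v"
  using assms unfolding subtree_def by (auto intro: rtrancl_trans)

lemma finite_leaves_Int_subtree: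
  assumes "finite V"
  shows "finite (leaves V r par \<inter> subtree V r par u)"
  using assms unfolding subtree_def by (auto intro: finite_subset)

lemma can_offer_le:
  assumes "finite V" "0 \<le> B"
    and offer: "can_offer V r par N B C Bw sc v n"
    and "m \<le> n" "m + n \<le> N"
  shows "can_offer V r par N B C Bw sc v m"
proof -
  let ?L = "leaves V r par" and ?T = "subtree V r par"
  have fin: "\<And>u. finite (?L \<inter> ?T u)"
    using assms(1) by (rule finite_leaves_Int_subtree)
  obtain w where cap: "\<forall>h \<in> ?L \<inter> ?T v. w h \<le> C h"
    and failed: "\<forall>h \<in> ?L \<inter> ?T v. sc = Some h \<longrightarrow> w h = 0"
    and total: "(\<Sum>h \<in> ?L \<inter> ?T v. w h) = n"
    and links: "\<forall>u \<in> ?T v. u \<noteq> r \<longrightarrow>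
           (let nu = (\<Sum>h \<in> ?L \<inter> ?T u. w h)
            in min (real nu) (real N - real nu) * B \<le> Bw u)"
    using offer unfolding can_offer_def by blast
  obtain w' where w'_le: "\<forall>h. w' h \<le> w h" and w'_total: "sum w' (?L \<inter> ?T v) = m"
    using exists_pointwise_le_sum_eq[OF fin, of m w v] total \<open>m \<le> n\<close> by auto
  show ?thesis unfolding can_offer_def
  proof (intro exI[of _ w'] conjI ballI impI)
    fix h assume "h \<in> ?L \<inter> ?T v"
    then show "w' h \<le> C h" using cap w'_le le_trans by blast
  next
    fix h assume "h \<in> ?L \<inter> ?T v" "sc = Some h"
    then show "w' h = 0" using failed w'_le by (metis le_zero_eq)
  next
    show "sum w' (?L \<inter> ?T v) = m" by (rule w'_total)
  next
    fix u assume u: "u \<in> ?T v" "u \<noteq> r"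
    define k where "k = (\<Sum>h \<in> ?L \<inter> ?T u. w h)"
    define k' where "k' = (\<Sum>h \<in> ?L \<inter> ?T u. w' h)"
    have "k' \<le> k" unfolding k'_def k_def using w'_le by (intro sum_mono) auto
    moreover have "k \<le> n" unfolding k_def total[symmetric]
      using subtree_mono[OF u(1)] fin by (intro sum_mono2) auto
    moreover have "k' \<le> m" unfolding k'_def w'_total[symmetric]
      using subtree_mono[OF u(1)] fin by (intro sum_mono2) auto
    ultimately have "min (real k') (real N - real k') * B \<le> min (real k) (real N - real k) * B"
      using min_demand_mono \<open>m + n \<le> N\<close> \<open>0 \<le> B\<close> by blast
    also have "\<dots> \<le> Bw u" using links u unfolding k_def Let_def by blast
    finally show "let nu = (\<Sum>h \<in> ?L \<inter> ?T u. w' h) in min (real nu) (real N - real nu) * B \<le> Bw u"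
      unfolding k'_def Let_def .
  qed
qed

theorem lemma1:
  fixes V :: "'v set" and r :: 'v and par :: "'v \<Rightarrow> 'v"
    and N :: nat and B :: real and C :: "'v \<Rightarrow> nat" and Bw :: "'v \<Rightarrow> real"
    and sc :: "'v option" and v :: 'v and nv m :: nat
  assumes "rooted_tree V r par"
    and "0 < N" and "0 \<le> B"
    and "\<forall>u \<in> V - {r}. 0 \<le> Bw u"
    and "\<forall>f. sc = Some f \<longrightarrow> f \<in> leaves V r par"
    and "v \<in> V"
    and "can_offer V r par N B C Bw sc v nv"
    and "real N / 2 < real nv" and "nv \<le> N"
    and "m \<le> N - nv"
  shows "can_offer V r par N B C Bw sc v m"
proof (rule can_offer_le)
  show "finite V" using assms(1) unfolding rooted_tree_def by blast
  show "m \<le> nv" using assms(8-10) by linarith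
  show "m + nv \<le> N" using assms(9,10) by linarith
qed (use assms(3,7) in auto)

end
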